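(* Let $\mathbb P$ be a Bernoulli measure on $\partial\mathcal M$, $f(x)=\mathbb P({\uparrow}x)$ for $x\in\mathcal M$, and let $B=(B_{\gamma,\gamma'})_{\gamma,\gamma'\in\mathfrak C}$ be the non-negative matrix with $B_{\gamma,\gamma'}=f(\gamma')$ if $\gamma\to\gamma'$ and $B_{\gamma,\gamma'}=0$ otherwise. Then the spectral radius of $B$ equals $1$.
   Context: Let $\Sigma$ be a finite set with at least two elements and $I\subseteq\Sigma\times\Sigma$ a symmetric irreflexive relation such that $(\Sigma,(\Sigma\times\Sigma)\setminus I)$ is connected. The heap monoid $\mathcal M=\mathcal M(\Sigma,I)$ is $\Sigma^*$ modulo the smallest congruence containing $(ab,ba)$ for $(a,b)\in I$; $\cdot$ is concatenation, $0$ the empty heap. $x\le y$ iff $y=x\cdot z$ for some $z$. Cliques are heaps formed by distinct pairwise independent pieces; $\mathfrak C$ the nonempty ones; $\gamma\to\gamma'$ iff each piece of $\gamma'$ is dependent (not in $I$) on some piece of $\gamma$. Every nonempty heap has a unique Cartier–Foata decomposition $\gamma_1\cdots\gamma_n$ with $\gamma_i\in\mathfrak C$, $\gamma_i\to\gamma_{i+1}$. The boundary $\partial\mathcal M$ is the set of infinite sequences $(\gamma_n)_{n\ge1}$ of nonempty cliques with $\gamma_n\to\gamma_{n+1}$, ordered together with $\mathcal M$ by $\xi\le\xi'$ iff $\gamma_1\cdots\gamma_n\le\gamma'_1\cdots\gamma'_n$ for all $n$ (finite heaps padded with empty cliques). ${\uparrow}x=\{\xi\in\partial\mathcal M:x\le\xi\}$;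 $\mathcal F$ the generated $\sigma$-algebra. A Bernoulli measure is a probability $\mathbb P$ on $(\partial\mathcal M,\mathcal F)$ with $\mathbb P({\uparrow}(x\cdot y))=\mathbb P({\uparrow}x)\mathbb P({\uparrow}y)$ and $\mathbb P({\uparrow}x)>0$ for all $x,y$. *)

theory Defs
  imports "HOL-Probability.Probability" "Jordan_Normal_Form.Spectral_Radius"
begin

inductive teq :: "('a \<times> 'a) set \<Rightarrow> 'a list \<Rightarrow> 'a list \<Rightarrow> bool" for I where
  teq_refl: "teq I w w"
| teq_swap: "(a, b) \<in> I \<Longrightarrow> teq I (u @ [a, b] @ v) (u @ [b, a] @ v)"
| teq_sym: "teq I u v \<Longrightarrow> teq I v u"
| teq_trans: "teq I u v \<Longrightarrow> teq I v w \<Longrightarrow> teq I u w"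

definition heap :: "('a \<times> 'a) set \<Rightarrow> 'a list \<Rightarrow> 'a list set" where
  "heap I w = {v. teq I w v}"

definition heaps :: "'a set \<Rightarrow> ('a \<times> 'a) set \<Rightarrow> 'a list set set" where
  "heaps S I = heap I ` lists S"

definition hcat :: "('a \<times> 'a) set \<Rightarrow> 'a list set \<Rightarrow> 'a list set \<Rightarrow> 'a list set" where
  "hcat I x y = {w. \<exists>u\<in>x. \<exists>v\<in>y. teq I (u @ v) w}"

definition hempty :: "('a \<times> 'a) set \<Rightarrow> 'a list set" where
  "hempty I = heap I []"

definition hprod :: "('a \<times> 'a) set \<Rightarrow> 'a list set list \<Rightarrow> 'a list set" where
  "hprod I xs = foldr (hcat I) xs (hempty I)"

definition hle :: "'a set \<Rightarrow> ('a \<times> 'a) set \<Rightarrow> 'a list set \<Rightarrow> 'a list set \<Rightarrow> bool" where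
  "hle S I x y \<longleftrightarrow> (\<exists>z \<in> heaps S I. y = hcat I x z)"

definition pieces :: "'a list set \<Rightarrow> 'a set" where
  "pieces x = \<Union> (set ` x)"

definition cliques :: "'a set \<Rightarrow> ('a \<times> 'a) set \<Rightarrow> 'a list set set" where
  "cliques S I = {heap I l | l. l \<in> lists S \<and> l \<noteq> [] \<and> distinct l \<and>
      (\<forall>a\<in>set l. \<forall>b\<in>set l. a \<noteq> b \<longrightarrow> (a, b) \<in> I)}"

definition arrow :: "('a \<times> 'a) set \<Rightarrow> 'a list set \<Rightarrow> 'a list set \<Rightarrow> bool" where
  "arrow I c c' \<longleftrightarrow> (\<forall>b\<in>pieces c'. \<exists>a\<in>pieces c. (a, b) \<notin> I)"

text \<open>Cartier--Foata decomposition (the unique one; empty list for the empty heap).\<close>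
definition cf :: "'a set \<Rightarrow> ('a \<times> 'a) set \<Rightarrow> 'a list set \<Rightarrow> 'a list set list" where
  "cf S I x = (THE cs. set cs \<subseteq> cliques S I \<and> successively (arrow I) cs \<and> hprod I cs = x)"

definition cf_pad :: "'a set \<Rightarrow> ('a \<times> 'a) set \<Rightarrow> 'a list set \<Rightarrow> nat \<Rightarrow> 'a list set" where
  "cf_pad S I x n = (if n < length (cf S I x) then cf S I x ! n else hempty I)"

definition boundary :: "'a set \<Rightarrow> ('a \<times> 'a) set \<Rightarrow> (nat \<Rightarrow> 'a list set) set" where
  "boundary S I = {g. (\<forall>n. g n \<in> cliques S I) \<and> (\<forall>n. arrow I (g n) (g (Suc n)))}"

text \<open>Up-set of a heap x in the boundary: x \<le> xi iff the products of the first n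
cliques compare for all n (x padded with empty cliques).\<close>
definition up :: "'a set \<Rightarrow> ('a \<times> 'a) set \<Rightarrow> 'a list set \<Rightarrow> (nat \<Rightarrow> 'a list set) set" where
  "up S I x = {xi \<in> boundary S I. \<forall>n.
      hle S I (hprod I (map (cf_pad S I x) [0..<n])) (hprod I (map xi [0..<n]))}"

definition bernoulli :: "'a set \<Rightarrow> ('a \<times> 'a) set \<Rightarrow> (nat \<Rightarrow> 'a list set) measure \<Rightarrow> bool" where
  "bernoulli S I P \<longleftrightarrow> prob_space P \<and> space P = boundary S I \<and>
     sets P = sigma_sets (boundary S I) (up S I ` heaps S I) \<and>
     (\<forall>x\<in>heaps S I. \<forall>y\<in>heaps S I.
        measure P (up S I (hcat I x y)) = measure P (up S I x) * measure P (up S I y)) \<and>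
     (\<forall>x\<in>heaps S I. measure P (up S I x) > 0)"

text \<open>A fixed enumeration of the (finitely many) nonempty cliques; the spectral radius
of the matrix B does not depend on the choice of enumeration.\<close>
definition clique_enum :: "'a set \<Rightarrow> ('a \<times> 'a) set \<Rightarrow> 'a list set list" where
  "clique_enum S I = (SOME l. distinct l \<and> set l = cliques S I)"

definition Bmat :: "'a set \<Rightarrow> ('a \<times> 'a) set \<Rightarrow> (nat \<Rightarrow> 'a list set) measure \<Rightarrow> complex mat" where
  "Bmat S I P = (let cs = clique_enum S I in
     mat (length cs) (length cs) (\<lambda>(i, j).
       if arrow I (cs ! i) (cs ! j) then complex_of_real (measure P (up S I (cs ! j))) else 0))"

end

theory Submission
  imports Defs
begin

text \<open>
  Identify a nonempty clique with its set of pieces, an independent set \<open>c\<close>. Let \<open>q c\<close> be the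
  probability that the first clique of a random boundary point is \<open>c\<close>; then
  \<open>f c = (\<Sum>c' \<supseteq> c. q c')\<close>. Moebius inversion over the independent sets of pieces commuting
  with \<open>\<gamma>\<close>, together with the multiplicativity of \<open>f\<close>, gives \<open>q \<gamma> = f \<gamma> * h \<gamma>\<close>, where \<open>h \<gamma>\<close>
  is the probability that every piece of the first clique depends on a piece of \<open>\<gamma>\<close>, i.e. that
  \<open>\<gamma>\<close> points to the first clique. Summing \<open>q\<close> over these cliques shows \<open>B h = h\<close>. Connectivity
  of the dependence graph forces \<open>h > 0\<close>, and a nonnegative matrix with a positive fixed vector
  has spectral radius \<open>1\<close>.
\<close>

section \<open>Nonnegative matrices with a positive eigenvector\<close>

lemma mat_of_real_mult_vec_nth:
  fixes a :: "nat \<Rightarrow> nat \<Rightarrow> real"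
  assumes "i < n" and "w \<in> carrier_vec n"
  shows "(mat n n (\<lambda>(i, j). complex_of_real (a i j)) *\<^sub>v w) $ i
    = (\<Sum>j<n. complex_of_real (a i j) * w $ j)"
  using assms by (auto simp: scalar_prod_def lessThan_atLeast0 intro!: sum.cong)

lemma norm_eigenvalue_le_if_pos_eigenvector:
  fixes a :: "nat \<Rightarrow> nat \<Rightarrow> real" and x :: "nat \<Rightarrow> real"
  assumes a_nonneg: "\<And>i j. 0 \<le> a i j" and x_pos: "\<And>i. i < n \<Longrightarrow> 0 < x i"
    and eigen: "\<And>i. i < n \<Longrightarrow> (\<Sum>j<n. a i j * x j) = r * x i"
    and k: "k \<in> spectrum (mat n n (\<lambda>(i, j). complex_of_real (a i j)))"
  shows "norm k \<le> r"
proof -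
  obtain w where "eigenvector (mat n n (\<lambda>(i, j). complex_of_real (a i j))) w k"
    using k unfolding spectrum_def eigenvalue_def by auto
  then have w: "w \<in> carrier_vec n" "w \<noteq> 0\<^sub>v n"
    and Aw: "mat n n (\<lambda>(i, j). complex_of_real (a i j)) *\<^sub>v w = k \<cdot>\<^sub>v w"
    unfolding eigenvector_def by auto
  obtain j0 where j0: "j0 < n" "w $ j0 \<noteq> 0"
    using w by (metis eq_vecI carrier_vecD index_zero_vec)
  define ratio where "ratio i = norm (w $ i) / x i" for i
  obtain i0 where i0: "i0 < n" "ratio i0 = Max (ratio ` {..<n})"
    using Max_in[of "ratio ` {..<n}"] j0(1) by fastforce
  have ratio_max: "ratio j \<le> ratio i0" if "j < n" for j
    using i0(2) that by simp
  have norm_w: "norm (w $ j) = ratio j * x j" if "j < n" for j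
    using x_pos[OF that] unfolding ratio_def by simp
  have "0 < ratio j0"
    using j0 x_pos unfolding ratio_def by simp
  then have pos: "0 < ratio i0 * x i0"
    using ratio_max[OF j0(1)] x_pos[OF i0(1)] by simp
  have "norm k * (ratio i0 * x i0) = norm ((mat n n (\<lambda>(i, j). complex_of_real (a i j)) *\<^sub>v w) $ i0)"
    using Aw w i0(1) norm_w[OF i0(1)] by (simp add: norm_mult)
  also have "\<dots> \<le> (\<Sum>j<n. a i0 j * norm (w $ j))"
    using norm_sum[of "\<lambda>j. complex_of_real (a i0 j) * w $ j"] a_nonneg
    by (simp add: mat_of_real_mult_vec_nth[OF i0(1) w(1)] norm_mult)
  also have "\<dots> \<le> (\<Sum>j<n. a i0 j * (ratio i0 * x j))"
    using ratio_max x_pos a_nonneg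
    by (intro sum_mono mult_left_mono) (auto simp: norm_w mult_right_mono)
  also have "\<dots> = ratio i0 * (\<Sum>j<n. a i0 j * x j)"
    by (simp add: sum_distrib_left mult_ac)
  also have "\<dots> = r * (ratio i0 * x i0)"
    using eigen[OF i0(1)] by simp
  finally show ?thesis
    using pos mult_le_cancel_right_pos by blast
qed

lemma spectral_radius_eq_if_pos_eigenvector:
  fixes a :: "nat \<Rightarrow> nat \<Rightarrow> real" and x :: "nat \<Rightarrow> real"
  assumes n: "0 < n" and a_nonneg: "\<And>i j. 0 \<le> a i j" and x_pos: "\<And>i. i < n \<Longrightarrow> 0 < x i"
    and eigen: "\<And>i. i < n \<Longrightarrow> (\<Sum>j<n. a i j * x j) = r * x i"
  shows "spectral_radius (mat n n (\<lambda>(i, j). complex_of_real (a i j))) = r"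
proof -
  let ?A = "mat n n (\<lambda>(i, j). complex_of_real (a i j))"
  have A: "?A \<in> carrier_mat n n"
    by simp
  have "0 \<le> (\<Sum>j<n. a 0 j * x j)"
    using a_nonneg x_pos by (intro sum_nonneg) (simp add: less_imp_le)
  then have r_nonneg: "0 \<le> r"
    using eigen[OF n] x_pos[OF n] by (simp add: zero_le_mult_iff)
  define v where "v = vec n (\<lambda>i. complex_of_real (x i))"
  have v: "v \<in> carrier_vec n"
    by (simp add: v_def)
  have "v $ 0 \<noteq> 0"
    using x_pos[OF n] n by (simp add: v_def)
  then have "v \<noteq> 0\<^sub>v n"
    using n by auto
  moreover have "(?A *\<^sub>v v) $ i = (complex_of_real r \<cdot>\<^sub>v v) $ i" if "i < n" for i
  proof -
    have "(?A *\<^sub>v v) $ i = (\<Sum>j<n. complex_of_real (a i j) * v $ j)"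
      by (rule mat_of_real_mult_vec_nth[OF that v])
    also have "\<dots> = complex_of_real (\<Sum>j<n. a i j * x j)"
      by (simp add: v_def)
    finally show ?thesis
      using that by (simp add: eigen v_def)
  qed
  then have "?A *\<^sub>v v = complex_of_real r \<cdot>\<^sub>v v"
    using v by (intro eq_vecI) auto
  ultimately have "eigenvector ?A v (complex_of_real r)"
    using v by (simp add: eigenvector_def)
  then have "r \<in> norm ` spectrum ?A"
    using r_nonneg unfolding spectrum_def eigenvalue_def
    by (auto intro!: image_eqI[of r norm "complex_of_real r"])
  then have "r \<le> spectral_radius ?A"
    by (rule spectral_radius_mem_max(2)[OF A n])
  moreover have "spectral_radius ?A \<le> r"
    using spectral_radius_mem_max(1)[OF A n]
      norm_eigenvalue_le_if_pos_eigenvector[OF a_nonneg x_pos eigen] by auto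
  ultimately show ?thesis
    by simp
qed

section \<open>Independent sets of pieces\<close>

definition indep_set :: "('a \<times> 'a) set \<Rightarrow> 'a set \<Rightarrow> bool" where
  "indep_set I c \<longleftrightarrow> (\<forall>a\<in>c. \<forall>b\<in>c. a \<noteq> b \<longrightarrow> (a, b) \<in> I)"

definition clique_sets :: "'a set \<Rightarrow> ('a \<times> 'a) set \<Rightarrow> 'a set set" where
  "clique_sets S I = {c. c \<subseteq> S \<and> c \<noteq> {} \<and> indep_set I c}"

definition dependent_letters :: "'a set \<Rightarrow> ('a \<times> 'a) set \<Rightarrow> 'a set \<Rightarrow> 'a set" where
  "dependent_letters S I c = {b\<in>S. \<exists>a\<in>c. (a, b) \<notin> I}"

definition independent_letters :: "'a set \<Rightarrow> ('a \<times> 'a) set \<Rightarrow> 'a set \<Rightarrow> 'a set" where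
  "independent_letters S I c = {b\<in>S. \<forall>a\<in>c. (a, b) \<in> I}"

lemma finite_clique_sets: "finite S \<Longrightarrow> finite (clique_sets S I)"
  by (rule finite_subset[of _ "Pow S"]) (auto simp: clique_sets_def)

lemma finite_if_clique_set: "finite S \<Longrightarrow> c \<in> clique_sets S I \<Longrightarrow> finite c"
  by (auto simp: clique_sets_def intro: finite_subset)

lemma sum_Pow_minus_one_power_card:
  assumes "finite X"
  shows "(\<Sum>A\<in>Pow X. (-1::real) ^ card A) = (if X = {} then 1 else 0)"
proof -
  have "(\<Sum>A\<in>Pow X. (-1::real) ^ card A) = 0 ^ card X"
    using prod_diff_conv_sum[OF assms, of "\<lambda>_. 1::real" "\<lambda>_. 1"] by simp
  with assms show ?thesis
    by (simp add: card_gt_0_iff)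
qed

lemma clique_extension_step:
  assumes "sym I" and irrefl: "\<forall>a. (a, a) \<notin> I"
    and conn: "\<forall>a\<in>S. \<forall>b\<in>S. (a, b) \<in> ((S \<times> S) - I)\<^sup>*"
    and \<gamma>: "\<gamma> \<in> clique_sets S I" and not_all: "\<not> S \<subseteq> dependent_letters S I \<gamma>"
  obtains \<gamma>1 u where "\<gamma>1 \<in> clique_sets S I" "\<gamma>1 \<subseteq> dependent_letters S I \<gamma>"
    "u \<in> S - \<gamma>" "insert u \<gamma> \<in> clique_sets S I" "insert u \<gamma> \<subseteq> dependent_letters S I \<gamma>1"
proof -
  let ?D = "dependent_letters S I \<gamma>"
  have \<gamma>_D: "\<gamma> \<subseteq> ?D"
    using \<gamma> irrefl by (auto simp: clique_sets_def dependent_letters_def)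
  obtain v where v: "v \<in> S" "v \<notin> ?D"
    using not_all by auto
  obtain g where g: "g \<in> \<gamma>"
    using \<gamma> by (auto simp: clique_sets_def)
  have "(g, v) \<in> ((S \<times> S) - I)\<^sup>*"
    using conn g \<gamma> v(1) by (auto simp: clique_sets_def)
  then have "\<exists>w u. (w, u) \<in> (S \<times> S) - I \<and> w \<in> ?D \<and> u \<notin> ?D"
    using g \<gamma>_D v(2) by (induction rule: rtrancl_induct) auto
  then obtain w u where wu: "w \<in> S" "u \<in> S" "(w, u) \<notin> I" "w \<in> ?D" "u \<notin> ?D"
    by blast
  have u_indep: "\<forall>a\<in>\<gamma>. (a, u) \<in> I"
    using wu by (auto simp: dependent_letters_def)
  \<comment> \<open>\<open>\<gamma>1\<close> keeps the pieces of \<open>\<gamma>\<close> commuting with \<open>w\<close>; the others depend on \<open>w\<close> and so on \<open>\<gamma>1\<close>.\<close>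
  define \<gamma>1 where "\<gamma>1 = insert w {a\<in>\<gamma>. (w, a) \<in> I}"
  show thesis
  proof
    show "\<gamma>1 \<in> clique_sets S I" "\<gamma>1 \<subseteq> ?D"
      using \<gamma> wu \<gamma>_D \<open>sym I\<close> unfolding \<gamma>1_def clique_sets_def indep_set_def
      by (auto dest: symD)
    show "u \<in> S - \<gamma>" "insert u \<gamma> \<in> clique_sets S I"
      using \<gamma> wu \<gamma>_D u_indep \<open>sym I\<close> unfolding clique_sets_def indep_set_def
      by (auto dest: symD)
    show "insert u \<gamma> \<subseteq> dependent_letters S I \<gamma>1"
      using \<gamma> wu irrefl unfolding dependent_letters_def \<gamma>1_def clique_sets_def by auto
  qed
qed

lemma clique_sets_above_disjoint_independent_letters:
  assumes irrefl: "\<forall>a. (a, a) \<notin> I" and \<gamma>: "\<gamma> \<in> clique_sets S I"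
  shows "{c\<in>clique_sets S I. \<gamma> \<subseteq> c \<and> c \<inter> independent_letters S I \<gamma> = {}} = {\<gamma>}"
proof -
  have "c = \<gamma>" if c: "c \<in> clique_sets S I" "\<gamma> \<subseteq> c" "c \<inter> independent_letters S I \<gamma> = {}" for c
  proof (rule ccontr)
    assume "c \<noteq> \<gamma>"
    then obtain b where "b \<in> c" "b \<notin> \<gamma>"
      using c by auto
    then have "b \<in> independent_letters S I \<gamma>"
      using c(1,2) by (auto simp: clique_sets_def indep_set_def independent_letters_def)
    then show False
      using c(3) \<open>b \<in> c\<close> by blast
  qed
  moreover have "\<gamma> \<inter> independent_letters S I \<gamma> = {}"
    using irrefl by (auto simp: independent_letters_def)
  ultimately show ?thesis
    using \<gamma> by auto
qed

section \<open>Weights on cliques\<close>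

text \<open>For a weight \<open>q\<close> on cliques, \<open>up_weight\<close> and \<open>dep_weight\<close> are the functions \<open>f\<close> and \<open>h\<close> of
  the proof sketch.\<close>

definition up_weight :: "'a set \<Rightarrow> ('a \<times> 'a) set \<Rightarrow> ('a set \<Rightarrow> real) \<Rightarrow> 'a set \<Rightarrow> real" where
  "up_weight S I q c = (\<Sum>c'\<in>{c'\<in>clique_sets S I. c \<subseteq> c'}. q c')"

definition dep_weight :: "'a set \<Rightarrow> ('a \<times> 'a) set \<Rightarrow> ('a set \<Rightarrow> real) \<Rightarrow> 'a set \<Rightarrow> real" where
  "dep_weight S I q \<gamma> = (\<Sum>c\<in>{c\<in>clique_sets S I. c \<subseteq> dependent_letters S I \<gamma>}. q c)"

lemma sum_independent_subsets_alternating: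
  fixes q :: "'a set \<Rightarrow> real"
  assumes "finite S" and "T \<subseteq> S"
  shows "(\<Sum>A\<in>{A. A \<subseteq> T \<and> indep_set I A}. (-1) ^ card A * up_weight S I q (A \<union> \<beta>))
    = (\<Sum>c\<in>{c\<in>clique_sets S I. \<beta> \<subseteq> c \<and> c \<inter> T = {}}. q c)"
proof -
  let ?A = "{A. A \<subseteq> T \<and> indep_set I A}"
  have fin_CS: "finite (clique_sets S I)"
    using assms(1) by (rule finite_clique_sets)
  have fin_T: "finite T"
    using assms finite_subset by blast
  have fin_A: "finite ?A"
    by (rule finite_subset[of _ "Pow T"]) (use fin_T in auto)
  have inner: "(\<Sum>A\<in>?A. if A \<union> \<beta> \<subseteq> c then (-1) ^ card A * q c else 0)
      = (if \<beta> \<subseteq> c \<and> c \<inter> T = {} then q c else 0)" if c: "c \<in> clique_sets S I" for c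
  proof (cases "\<beta> \<subseteq> c")
    case True
    have "{A\<in>?A. A \<subseteq> c} = Pow (T \<inter> c)"
      using c by (auto simp: clique_sets_def indep_set_def) blast
    then have "(\<Sum>A\<in>?A. if A \<union> \<beta> \<subseteq> c then (-1) ^ card A * q c else 0)
        = (\<Sum>A\<in>Pow (T \<inter> c). (-1::real) ^ card A) * q c"
      using True by (simp add: sum.inter_filter[OF fin_A, symmetric] sum_distrib_right)
    then show ?thesis
      using True sum_Pow_minus_one_power_card[of "T \<inter> c"] fin_T by (simp add: Int_commute)
  qed auto
  have "(\<Sum>A\<in>?A. (-1) ^ card A * up_weight S I q (A \<union> \<beta>))
      = (\<Sum>A\<in>?A. \<Sum>c\<in>clique_sets S I. if A \<union> \<beta> \<subseteq> c then (-1) ^ card A * q c else 0)"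
    by (simp add: up_weight_def sum.inter_filter[OF fin_CS] sum_distrib_left if_distrib cong: if_cong)
  also have "\<dots> = (\<Sum>c\<in>clique_sets S I. \<Sum>A\<in>?A. if A \<union> \<beta> \<subseteq> c then (-1) ^ card A * q c else 0)"
    by (rule sum.swap)
  also have "\<dots> = (\<Sum>c\<in>clique_sets S I. if \<beta> \<subseteq> c \<and> c \<inter> T = {} then q c else 0)"
    using inner by (rule sum.cong[OF refl])
  finally show ?thesis
    by (simp add: sum.inter_filter[OF fin_CS])
qed

lemma weight_eq_up_weight_mult_dep_weight:
  fixes q :: "'a set \<Rightarrow> real"
  assumes fin: "finite S" and irrefl: "\<forall>a. (a, a) \<notin> I"
    and sum_q: "(\<Sum>c\<in>clique_sets S I. q c) = 1" and \<gamma>: "\<gamma> \<in> clique_sets S I"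
    and mult: "\<And>A. A \<in> clique_sets S I \<Longrightarrow> A \<subseteq> independent_letters S I \<gamma> \<Longrightarrow>
      up_weight S I q (\<gamma> \<union> A) = up_weight S I q \<gamma> * up_weight S I q A"
  shows "q \<gamma> = up_weight S I q \<gamma> * dep_weight S I q \<gamma>"
proof -
  let ?R = "independent_letters S I \<gamma>" and ?A = "{A. A \<subseteq> independent_letters S I \<gamma> \<and> indep_set I A}"
  have R: "?R \<subseteq> S"
    by (auto simp: independent_letters_def)
  have only_\<gamma>: "{c\<in>clique_sets S I. \<gamma> \<subseteq> c \<and> c \<inter> ?R = {}} = {\<gamma>}"
    using irrefl \<gamma> by (rule clique_sets_above_disjoint_independent_letters)
  have factors: "up_weight S I q (A \<union> \<gamma>) = up_weight S I q \<gamma> * up_weight S I q (A \<union> {})"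
    if "A \<in> ?A" for A
  proof (cases "A = {}")
    case True
    then show ?thesis
      using sum_q by (simp add: up_weight_def)
  next
    case False
    then show ?thesis
      using that R mult[of A] by (auto simp: clique_sets_def Un_commute)
  qed
  have "q \<gamma> = (\<Sum>c\<in>{c\<in>clique_sets S I. \<gamma> \<subseteq> c \<and> c \<inter> ?R = {}}. q c)"
    by (simp add: only_\<gamma>)
  also have "\<dots> = (\<Sum>A\<in>?A. (-1) ^ card A * up_weight S I q (A \<union> \<gamma>))"
    by (rule sum_independent_subsets_alternating[OF fin R, symmetric])
  also have "\<dots> = up_weight S I q \<gamma> * (\<Sum>A\<in>?A. (-1) ^ card A * up_weight S I q (A \<union> {}))"
    by (simp only: factors sum_distrib_left mult.left_commute cong: sum.cong)
  also have "\<dots> = up_weight S I q \<gamma> * (\<Sum>c\<in>{c\<in>clique_sets S I. {} \<subseteq> c \<and> c \<inter> ?R = {}}. q c)"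
    by (simp only: sum_independent_subsets_alternating[OF fin R])
  also have "{c\<in>clique_sets S I. {} \<subseteq> c \<and> c \<inter> ?R = {}}
      = {c\<in>clique_sets S I. c \<subseteq> dependent_letters S I \<gamma>}"
    by (auto simp: clique_sets_def independent_letters_def dependent_letters_def)
  finally show ?thesis
    by (simp add: dep_weight_def)
qed

lemma dep_weight_fixed_point:
  assumes "\<And>c. c \<in> clique_sets S I \<Longrightarrow> q c = up_weight S I q c * dep_weight S I q c"
  shows "(\<Sum>\<gamma>'\<in>{\<gamma>'\<in>clique_sets S I. \<gamma>' \<subseteq> dependent_letters S I \<gamma>}.
      up_weight S I q \<gamma>' * dep_weight S I q \<gamma>') = dep_weight S I q \<gamma>"
  unfolding dep_weight_def[of S I q \<gamma>] by (rule sum.cong) (simp_all add: assms)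

lemma dep_weight_eq_0_propagates:
  assumes fin: "finite S" and q_nonneg: "\<And>c. c \<in> clique_sets S I \<Longrightarrow> 0 \<le> q c"
    and zero: "dep_weight S I q \<gamma> = 0"
    and \<gamma>': "\<gamma>' \<in> clique_sets S I" "\<gamma>' \<subseteq> dependent_letters S I \<gamma>"
    and "0 < up_weight S I q \<gamma>'" and "q \<gamma>' = up_weight S I q \<gamma>' * dep_weight S I q \<gamma>'"
  shows "dep_weight S I q \<gamma>' = 0"
proof -
  have "finite {c\<in>clique_sets S I. c \<subseteq> dependent_letters S I \<gamma>}"
    using finite_clique_sets[OF fin] by simp
  from sum_nonneg_eq_0_iff[OF this, of q] have "q \<gamma>' = 0"
    using zero \<gamma>' q_nonneg unfolding dep_weight_def by simp
  with assms(6,7) show ?thesis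
    by simp
qed

lemma dep_weight_pos:
  assumes fin: "finite S" and "sym I" and irrefl: "\<forall>a. (a, a) \<notin> I"
    and conn: "\<forall>a\<in>S. \<forall>b\<in>S. (a, b) \<in> ((S \<times> S) - I)\<^sup>*"
    and q_nonneg: "\<And>c. c \<in> clique_sets S I \<Longrightarrow> 0 \<le> q c"
    and sum_q: "(\<Sum>c\<in>clique_sets S I. q c) = 1"
    and up_pos: "\<And>c. c \<in> clique_sets S I \<Longrightarrow> 0 < up_weight S I q c"
    and factor: "\<And>c. c \<in> clique_sets S I \<Longrightarrow> q c = up_weight S I q c * dep_weight S I q c"
    and \<gamma>: "\<gamma> \<in> clique_sets S I"
  shows "0 < dep_weight S I q \<gamma>"
proof -
  have nonneg: "0 \<le> dep_weight S I q \<gamma>" for \<gamma>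
    unfolding dep_weight_def using q_nonneg by (auto intro: sum_nonneg)
  have "dep_weight S I q \<gamma> \<noteq> 0" if "card (S - \<gamma>) = n" "\<gamma> \<in> clique_sets S I" for n \<gamma>
    using that
  proof (induction n arbitrary: \<gamma> rule: less_induct)
    case (less n)
    show ?case
    proof (cases "S \<subseteq> dependent_letters S I \<gamma>")
      case True
      then have "{c\<in>clique_sets S I. c \<subseteq> dependent_letters S I \<gamma>} = clique_sets S I"
        by (auto simp: clique_sets_def)
      then show ?thesis
        using sum_q by (simp add: dep_weight_def)
    next
      case False
      \<comment> \<open>\<open>\<gamma> \<rightarrow> \<gamma>1 \<rightarrow> insert u \<gamma>\<close>, so a zero at \<open>\<gamma>\<close> would propagate to the larger clique.\<close>
      obtain \<gamma>1 u where step: "\<gamma>1 \<in> clique_sets S I" "\<gamma>1 \<subseteq> dependent_letters S I \<gamma>"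
        "u \<in> S - \<gamma>" "insert u \<gamma> \<in> clique_sets S I" "insert u \<gamma> \<subseteq> dependent_letters S I \<gamma>1"
        by (rule clique_extension_step[OF \<open>sym I\<close> irrefl conn less.prems(2) False])
      have "card (S - insert u \<gamma>) < card (S - \<gamma>)"
        using step(3) fin by (intro psubset_card_mono) auto
      then have "dep_weight S I q (insert u \<gamma>) \<noteq> 0"
        using less.IH[OF _ refl step(4)] less.prems(1) by simp
      then have "dep_weight S I q \<gamma>1 \<noteq> 0"
        using dep_weight_eq_0_propagates[OF fin q_nonneg _ step(4,5) up_pos[OF step(4)] factor[OF step(4)]]
        by blast
      then show ?thesis
        using dep_weight_eq_0_propagates[OF fin q_nonneg _ step(1,2) up_pos[OF step(1)] factor[OF step(1)]]
        by blast
    qed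
  qed
  then show ?thesis
    using \<gamma> nonneg[of \<gamma>] by fastforce
qed

section \<open>Traces and clique heaps\<close>

lemma teq_mset_eq: "teq I u v \<Longrightarrow> mset u = mset v"
  by (induction rule: teq.induct) auto

lemma teq_set_eq: "teq I u v \<Longrightarrow> set u = set v"
  by (metis teq_mset_eq set_mset_mset)

lemma teq_append_cong: "teq I u v \<Longrightarrow> teq I (p @ u @ s) (p @ v @ s)"
proof (induction rule: teq.induct)
  case (teq_swap a b u v)
  then show ?case
    using teq.teq_swap[of a b I "p @ u" "v @ s"] by simp
qed (auto intro: teq.intros)

lemma heap_eq_iff: "heap I u = heap I v \<longleftrightarrow> teq I u v"
  unfolding heap_def by (auto intro: teq.intros)

lemma hcat_heap: "hcat I (heap I u) (heap I v) = heap I (u @ v)"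
proof -
  have "teq I (u @ v) (u' @ v')" if "teq I u u'" "teq I v v'" for u' v'
    using teq_append_cong[OF that(1), of "[]" v] teq_append_cong[OF that(2), of u' "[]"]
    by (auto intro: teq_trans)
  then show ?thesis
    unfolding hcat_def heap_def by (auto intro: teq.intros)
qed

lemma hprod_map_heap: "hprod I (map (heap I) ws) = heap I (concat ws)"
  by (induction ws) (auto simp: hprod_def hempty_def hcat_heap)

lemma pieces_heap: "pieces (heap I u) = set u"
  unfolding pieces_def heap_def using teq_set_eq[of I u] by (auto intro: teq_refl)

lemma hle_heap_imp_set_subset:
  assumes "hle S I (heap I u) (heap I w)"
  shows "set u \<subseteq> set w"
proof -
  obtain v where "heap I w = heap I (u @ v)"
    using assms by (auto simp: hle_def heaps_def hcat_heap)
  then show ?thesis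
    by (auto simp: heap_eq_iff dest: teq_set_eq)
qed

lemma hle_heap_append: "v \<in> lists S \<Longrightarrow> hle S I (heap I u) (heap I (u @ v))"
  unfolding hle_def heaps_def by (auto simp: hcat_heap)

lemma teq_Cons_commute: "\<forall>y\<in>set ys. (x, y) \<in> I \<Longrightarrow> teq I (x # ys @ zs) (ys @ x # zs)"
proof (induction ys)
  case (Cons y ys)
  have "teq I (x # y # ys @ zs) (y # x # ys @ zs)"
    using teq_swap[of x y I "[]" "ys @ zs"] Cons.prems by simp
  moreover have "teq I (y # x # ys @ zs) (y # ys @ x # zs)"
    using teq_append_cong[OF Cons.IH, of "[y]" "[]"] Cons.prems by simp
  ultimately show ?case
    by (auto intro: teq_trans)
qed (simp add: teq_refl)

lemma teq_independent_perm:
  "distinct l \<Longrightarrow> distinct l' \<Longrightarrow> set l = set l' \<Longrightarrow> indep_set I (set l) \<Longrightarrow> teq I l l'"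
proof (induction l arbitrary: l')
  case (Cons x xs)
  have "x \<in> set l'"
    using Cons.prems(3) by auto
  then obtain ys zs where l': "l' = ys @ x # zs"
    by (meson split_list)
  have "indep_set I (set xs)"
    using Cons.prems(4) by (simp add: indep_set_def)
  then have "teq I xs (ys @ zs)"
    using Cons.prems(1-3) l' by (intro Cons.IH) auto
  then have "teq I (x # xs) (x # ys @ zs)"
    using teq_append_cong[of I xs "ys @ zs" "[x]" "[]"] by simp
  moreover have "teq I (x # ys @ zs) (ys @ x # zs)"
    using Cons.prems l' by (intro teq_Cons_commute) (auto simp: indep_set_def)
  ultimately show ?case
    using l' by (auto intro: teq_trans)
qed (simp add: teq_refl)

text \<open>The heap of an independent set of pieces does not depend on the order in which they are
  listed (\<open>teq_independent_perm\<close>), so an arbitrary enumeration can be used.\<close>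

definition some_list :: "'a set \<Rightarrow> 'a list" where
  "some_list c = (SOME l. distinct l \<and> set l = c)"

definition clique_heap :: "('a \<times> 'a) set \<Rightarrow> 'a set \<Rightarrow> 'a list set" where
  "clique_heap I c = heap I (some_list c)"

lemma some_list: "finite c \<Longrightarrow> distinct (some_list c) \<and> set (some_list c) = c"
  unfolding some_list_def by (metis (mono_tags, lifting) finite_distinct_list someI_ex)

lemma pieces_clique_heap: "finite c \<Longrightarrow> pieces (clique_heap I c) = c"
  by (simp add: clique_heap_def pieces_heap some_list)

lemma heap_eq_clique_heap:
  "distinct l \<Longrightarrow> indep_set I (set l) \<Longrightarrow> heap I l = clique_heap I (set l)"
  unfolding clique_heap_def heap_eq_iff using some_list[of "set l"]
  by (intro teq_independent_perm) auto

lemma hcat_clique_heap: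
  assumes "finite c" "finite c'" "c \<inter> c' = {}" "indep_set I (c \<union> c')"
  shows "hcat I (clique_heap I c) (clique_heap I c') = clique_heap I (c \<union> c')"
  unfolding clique_heap_def hcat_heap heap_eq_iff
  using assms some_list[of c] some_list[of c'] some_list[of "c \<union> c'"]
  by (intro teq_independent_perm) auto

lemma clique_heap_in_heaps:
  assumes "finite S" "c \<in> clique_sets S I"
  shows "clique_heap I c \<in> heaps S I"
  using assms some_list[OF finite_if_clique_set[OF assms]]
  unfolding heaps_def clique_heap_def by (intro imageI) (auto simp: clique_sets_def)

lemma cliques_eq_clique_heap_image:
  assumes fin: "finite S"
  shows "cliques S I = clique_heap I ` clique_sets S I"
proof
  show "cliques S I \<subseteq> clique_heap I ` clique_sets S I"
    unfolding cliques_def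
    by (auto simp: clique_sets_def indep_set_def heap_eq_clique_heap intro!: imageI)
  show "clique_heap I ` clique_sets S I \<subseteq> cliques S I"
  proof
    fix h assume "h \<in> clique_heap I ` clique_sets S I"
    then obtain c where c: "c \<in> clique_sets S I" "h = clique_heap I c"
      by auto
    then show "h \<in> cliques S I"
      using some_list[OF finite_if_clique_set[OF fin c(1)]] unfolding cliques_def
      by (auto simp: clique_sets_def indep_set_def clique_heap_def intro!: exI[of _ "some_list c"])
  qed
qed

lemma inj_on_clique_heap: "finite S \<Longrightarrow> inj_on (clique_heap I) (clique_sets S I)"
  by (metis inj_onI pieces_clique_heap finite_if_clique_set)

lemma arrow_clique_heap_iff:
  assumes "finite S" "\<gamma> \<in> clique_sets S I" "c \<in> clique_sets S I"
  shows "arrow I (clique_heap I \<gamma>) (clique_heap I c) \<longleftrightarrow> c \<subseteq> dependent_letters S I \<gamma>"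
  using assms(3)
  by (auto simp: arrow_def dependent_letters_def clique_sets_def
      pieces_clique_heap[OF finite_if_clique_set[OF assms(1,2)]]
      pieces_clique_heap[OF finite_if_clique_set[OF assms(1,3)]])

section \<open>First cliques of boundary points\<close>

lemma not_arrow_clique_heap_if_disjoint_subsets:
  assumes fin: "finite S" and c: "c \<in> clique_sets S I"
    and d: "d \<in> clique_sets S I" "d' \<in> clique_sets S I" "d \<inter> d' = {}" "d \<union> d' \<subseteq> c"
  shows "\<not> arrow I (clique_heap I d) (clique_heap I d')"
proof
  assume "arrow I (clique_heap I d) (clique_heap I d')"
  then have arrow: "\<forall>b\<in>d'. \<exists>a\<in>d. (a, b) \<notin> I"
    using d by (simp add: arrow_def pieces_clique_heap finite_if_clique_set[OF fin])
  obtain b where b: "b \<in> d'"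
    using d(2) by (auto simp: clique_sets_def)
  with arrow obtain a where a: "a \<in> d" "(a, b) \<notin> I"
    by blast
  have "a \<noteq> b" "a \<in> c" "b \<in> c"
    using a(1) b d(3,4) by auto
  then show False
    using a(2) c by (simp add: clique_sets_def indep_set_def)
qed

lemma cf_clique_heap:
  assumes fin: "finite S" and c: "c \<in> clique_sets S I"
  shows "cf S I (clique_heap I c) = [clique_heap I c]"
  unfolding cf_def
proof (rule the_equality)
  show "set [clique_heap I c] \<subseteq> cliques S I \<and> successively (arrow I) [clique_heap I c]
      \<and> hprod I [clique_heap I c] = clique_heap I c"
    using c by (simp add: cliques_eq_clique_heap_image[OF fin] hprod_def hempty_def clique_heap_def hcat_heap)
next
  fix cs
  assume cs: "set cs \<subseteq> cliques S I \<and> successively (arrow I) cs \<and> hprod I cs = clique_heap I c"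
  then have "cs \<in> lists (clique_heap I ` clique_sets S I)"
    by (auto simp: cliques_eq_clique_heap_image[OF fin])
  then obtain ds where ds: "set ds \<subseteq> clique_sets S I" "cs = map (clique_heap I) ds"
    unfolding lists_image by (auto simp: lists_eq_set)
  have some_list_ds: "distinct (some_list d) \<and> set (some_list d) = d" if "d \<in> set ds" for d
    using ds(1) that by (intro some_list finite_if_clique_set[OF fin]) auto
  have "hprod I cs = heap I (concat (map some_list ds))"
    using ds(2) hprod_map_heap[of I "map some_list ds"] by (simp add: clique_heap_def[abs_def] comp_def)
  then have "mset (concat (map some_list ds)) = mset (some_list c)"
    using cs by (auto simp: clique_heap_def heap_eq_iff dest: teq_mset_eq)
  then have concat: "distinct (concat (map some_list ds))" "set (concat (map some_list ds)) = c"
    using some_list[OF finite_if_clique_set[OF fin c]] by (metis mset_eq_imp_distinct_iff set_mset_mset)+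
  show "cs = [clique_heap I c]"
  proof (cases ds rule: remdups_adj.cases)
    case 1
    then show ?thesis
      using concat c by (simp add: clique_sets_def)
  next
    case (2 d)
    then show ?thesis
      using cs ds by (simp add: hprod_def hempty_def clique_heap_def hcat_heap)
  next
    case (3 d d' rest)
    have "d \<inter> d' = {}" "d \<union> d' \<subseteq> c"
      using concat 3 some_list_ds by auto
    then show ?thesis
      using cs ds not_arrow_clique_heap_if_disjoint_subsets[OF fin c, of d d'] 3 by auto
  qed
qed

lemma hprod_cf_pad_clique_heap:
  assumes "finite S" "c \<in> clique_sets S I"
  shows "hprod I (map (cf_pad S I (clique_heap I c)) [0..<Suc m]) = clique_heap I c"
proof -
  have "map (cf_pad S I (clique_heap I c)) [0..<Suc m]
      = map (heap I) (some_list c # replicate m [])"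
    using cf_clique_heap[OF assms]
    by (intro nth_equalityI)
      (auto simp: cf_pad_def clique_heap_def hempty_def nth_Cons' nth_map_upt simp del: upt_Suc)
  then show ?thesis
    by (simp only: hprod_map_heap) (simp add: clique_heap_def)
qed

lemma boundary_clique_heap:
  assumes "finite S" "\<xi> \<in> boundary S I"
  shows "pieces (\<xi> k) \<in> clique_sets S I \<and> \<xi> k = clique_heap I (pieces (\<xi> k))"
proof -
  have "\<xi> k \<in> clique_heap I ` clique_sets S I"
    using assms by (auto simp: boundary_def cliques_eq_clique_heap_image)
  then obtain c where "c \<in> clique_sets S I" "\<xi> k = clique_heap I c"
    by blast
  then show ?thesis
    using pieces_clique_heap finite_if_clique_set[OF assms(1)] by metis
qed

lemma hprod_boundary:
  assumes "finite S" "\<xi> \<in> boundary S I"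
  shows "hprod I (map \<xi> ks) = heap I (concat (map (\<lambda>k. some_list (pieces (\<xi> k))) ks))"
proof -
  have "map \<xi> ks = map (heap I) (map (\<lambda>k. some_list (pieces (\<xi> k))) ks)"
    unfolding map_map comp_def by (rule map_cong[OF refl]) (metis boundary_clique_heap[OF assms] clique_heap_def)
  then show ?thesis
    by (simp only: hprod_map_heap)
qed

lemma hle_clique_heap_append:
  assumes fin: "finite S" and c: "c \<in> clique_sets S I" and d: "d \<in> clique_sets S I"
    and "c \<subseteq> d" and rest: "rest \<in> lists S"
  shows "hle S I (clique_heap I c) (heap I (some_list d @ rest))"
proof -
  have fin_diff: "finite (d - c)"
    using finite_if_clique_set[OF fin d] by simp
  \<comment> \<open>Move the pieces of \<open>c\<close> to the front of \<open>d\<close>.\<close>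
  have "teq I (some_list d) (some_list c @ some_list (d - c))"
    using d \<open>c \<subseteq> d\<close> some_list[OF fin_diff] some_list[OF finite_if_clique_set[OF fin c]]
      some_list[OF finite_if_clique_set[OF fin d]]
    by (intro teq_independent_perm) (auto simp: clique_sets_def)
  from teq_append_cong[OF this, of "[]" rest]
  have "heap I (some_list d @ rest) = heap I (some_list c @ some_list (d - c) @ rest)"
    by (simp add: heap_eq_iff)
  moreover have "some_list (d - c) @ rest \<in> lists S"
    using d rest some_list[OF fin_diff] by (auto simp: clique_sets_def)
  ultimately show ?thesis
    by (simp add: clique_heap_def hle_heap_append)
qed

lemma up_clique_heap:
  assumes fin: "finite S" and c: "c \<in> clique_sets S I"
  shows "up S I (clique_heap I c) = {\<xi> \<in> boundary S I. c \<subseteq> pieces (\<xi> 0)}"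
proof -
  have "\<xi> \<in> up S I (clique_heap I c) \<longleftrightarrow> c \<subseteq> pieces (\<xi> 0)" if \<xi>: "\<xi> \<in> boundary S I" for \<xi>
  proof -
    define W where "W k = some_list (pieces (\<xi> k))" for k
    have W: "set (W k) = pieces (\<xi> k) \<and> pieces (\<xi> k) \<in> clique_sets S I" for k
      using boundary_clique_heap[OF fin \<xi>] finite_if_clique_set[OF fin] some_list by (metis W_def)
    then have W_lists: "concat (map W ks) \<in> lists S" for ks
      by (auto simp: lists_eq_set clique_sets_def)
    have prefix: "hprod I (map \<xi> ks) = heap I (concat (map W ks))" for ks
      unfolding W_def by (rule hprod_boundary[OF fin \<xi>])
    have "hle S I (hempty I) (heap I [])"
      using hle_heap_append[of "[]" S I "[]"] by (simp add: hempty_def)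
    then have prefix_hle:
      "hle S I (hprod I (map (cf_pad S I (clique_heap I c)) [0..<n])) (hprod I (map \<xi> [0..<n]))
        \<longleftrightarrow> (case n of 0 \<Rightarrow> True
          | Suc m \<Rightarrow> hle S I (clique_heap I c) (heap I (concat (map W [0..<Suc m]))))" for n
      by (cases n) (simp_all only: hprod_cf_pad_clique_heap[OF fin c] prefix, simp_all add: hprod_def)
    have "\<xi> \<in> up S I (clique_heap I c) \<longleftrightarrow> (\<forall>n.
        hle S I (hprod I (map (cf_pad S I (clique_heap I c)) [0..<n])) (hprod I (map \<xi> [0..<n])))"
      using \<xi> by (simp add: up_def)
    also have "\<dots> \<longleftrightarrow> (\<forall>m. hle S I (clique_heap I c) (heap I (W 0 @ concat (map W [1..<Suc m]))))"
      unfolding prefix_hle by (auto split: nat.split simp: upt_conv_Cons simp del: upt_Suc)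
    also have "\<dots> \<longleftrightarrow> c \<subseteq> pieces (\<xi> 0)"
    proof
      assume "\<forall>m. hle S I (clique_heap I c) (heap I (W 0 @ concat (map W [1..<Suc m])))"
      then have "set (some_list c) \<subseteq> set (W 0)"
        unfolding clique_heap_def by (auto dest!: spec[of _ 0] hle_heap_imp_set_subset)
      then show "c \<subseteq> pieces (\<xi> 0)"
        using W[of 0] some_list[OF finite_if_clique_set[OF fin c]] by simp
    next
      assume sub: "c \<subseteq> pieces (\<xi> 0)"
      show "\<forall>m. hle S I (clique_heap I c) (heap I (W 0 @ concat (map W [1..<Suc m])))"
      proof
        fix m
        show "hle S I (clique_heap I c) (heap I (W 0 @ concat (map W [1..<Suc m])))"
          using hle_clique_heap_append[OF fin c conjunct2[OF W[of 0]] sub W_lists[of "[1..<Suc m]"]]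
          by (simp only: W_def)
      qed
    qed
    finally show ?thesis .
  qed
  then show ?thesis
    by (auto simp: up_def)
qed

section \<open>The law of the first clique under a Bernoulli measure\<close>

definition first_clique_law ::
    "(nat \<Rightarrow> 'a list set) measure \<Rightarrow> 'a set \<Rightarrow> ('a \<times> 'a) set \<Rightarrow> 'a set \<Rightarrow> real" where
  "first_clique_law P S I c = measure P {\<xi> \<in> boundary S I. pieces (\<xi> 0) = c}"

lemma measure_first_clique_in:
  assumes fin: "finite S" and P: "bernoulli S I P" and C: "C \<subseteq> clique_sets S I"
  shows "measure P {\<xi> \<in> boundary S I. pieces (\<xi> 0) \<in> C} = (\<Sum>c\<in>C. first_clique_law P S I c)"
proof -
  interpret prob_space P
    using P by (simp add: bernoulli_def)
  have fin_C: "finite C"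
    using C finite_clique_sets[OF fin] finite_subset by blast
  have up_sets: "up S I (clique_heap I c) \<in> sets P" if "c \<in> clique_sets S I" for c
    using P clique_heap_in_heaps[OF fin that] by (auto simp: bernoulli_def intro: sigma_sets.Basic)
  have first_clique_eq: "{\<xi> \<in> boundary S I. pieces (\<xi> 0) = c}
      = up S I (clique_heap I c) - (\<Union>c'\<in>{c'\<in>clique_sets S I. c \<subset> c'}. up S I (clique_heap I c'))"
    if "c \<in> clique_sets S I" for c
  proof -
    have "pieces (\<xi> 0) = c
        \<longleftrightarrow> c \<subseteq> pieces (\<xi> 0) \<and> \<not> (\<exists>c'\<in>clique_sets S I. c \<subset> c' \<and> c' \<subseteq> pieces (\<xi> 0))"
      if "\<xi> \<in> boundary S I" for \<xi>
      using boundary_clique_heap[OF fin that, of 0] by blast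
    then show ?thesis
      using that by (auto simp: up_clique_heap[OF fin])
  qed
  have sets: "{\<xi> \<in> boundary S I. pieces (\<xi> 0) = c} \<in> sets P" if "c \<in> C" for c
  proof -
    have c: "c \<in> clique_sets S I"
      using that C by blast
    have "(\<Union>c'\<in>{c'\<in>clique_sets S I. c \<subset> c'}. up S I (clique_heap I c')) \<in> sets P"
      using up_sets finite_clique_sets[OF fin] by (intro sets.finite_UN) auto
    then show ?thesis
      unfolding first_clique_eq[OF c] using up_sets[OF c] by (rule sets.Diff[rotated])
  qed
  have "{\<xi> \<in> boundary S I. pieces (\<xi> 0) \<in> C} = (\<Union>c\<in>C. {\<xi> \<in> boundary S I. pieces (\<xi> 0) = c})"
    by auto
  moreover have "measure P (\<Union>c\<in>C. {\<xi> \<in> boundary S I. pieces (\<xi> 0) = c})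
      = (\<Sum>c\<in>C. measure P {\<xi> \<in> boundary S I. pieces (\<xi> 0) = c})"
    using fin_C sets by (intro finite_measure_finite_Union) (auto simp: disjoint_family_on_def)
  ultimately show ?thesis
    by (simp add: first_clique_law_def)
qed

lemma measure_up_clique_heap:
  assumes fin: "finite S" and P: "bernoulli S I P" and c: "c \<in> clique_sets S I"
  shows "measure P (up S I (clique_heap I c)) = up_weight S I (first_clique_law P S I) c"
proof -
  have "up S I (clique_heap I c) = {\<xi> \<in> boundary S I. pieces (\<xi> 0) \<in> {c'\<in>clique_sets S I. c \<subseteq> c'}}"
    using boundary_clique_heap[OF fin] by (auto simp: up_clique_heap[OF fin c])
  then show ?thesis
    using measure_first_clique_in[OF fin P, of "{c'\<in>clique_sets S I. c \<subseteq> c'}"]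
    by (simp add: up_weight_def)
qed

lemma sum_first_clique_law:
  assumes fin: "finite S" and P: "bernoulli S I P"
  shows "(\<Sum>c\<in>clique_sets S I. first_clique_law P S I c) = 1"
proof -
  have "boundary S I = {\<xi> \<in> boundary S I. pieces (\<xi> 0) \<in> clique_sets S I}"
    using boundary_clique_heap[OF fin] by auto
  moreover have "prob_space P" "space P = boundary S I"
    using P by (simp_all add: bernoulli_def)
  ultimately show ?thesis
    using measure_first_clique_in[OF fin P order.refl] prob_space.prob_space by metis
qed

lemma up_weight_first_clique_law_mult:
  assumes fin: "finite S" and P: "bernoulli S I P" and "sym I" and irrefl: "\<forall>a. (a, a) \<notin> I"
    and \<gamma>: "\<gamma> \<in> clique_sets S I" and A: "A \<in> clique_sets S I"
    and commute: "A \<subseteq> independent_letters S I \<gamma>"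
  shows "up_weight S I (first_clique_law P S I) (\<gamma> \<union> A)
    = up_weight S I (first_clique_law P S I) \<gamma> * up_weight S I (first_clique_law P S I) A"
proof -
  have disj: "\<gamma> \<inter> A = {}" and indep: "indep_set I (\<gamma> \<union> A)"
    using \<gamma> A commute irrefl \<open>sym I\<close>
    by (auto simp: clique_sets_def indep_set_def independent_letters_def dest: symD)
  then have "\<gamma> \<union> A \<in> clique_sets S I"
    using \<gamma> A by (auto simp: clique_sets_def)
  moreover have "clique_heap I (\<gamma> \<union> A) = hcat I (clique_heap I \<gamma>) (clique_heap I A)"
    using hcat_clique_heap[OF finite_if_clique_set[OF fin \<gamma>] finite_if_clique_set[OF fin A] disj indep] ..
  ultimately show ?thesis
    using P clique_heap_in_heaps[OF fin \<gamma>] clique_heap_in_heaps[OF fin A] \<gamma> A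
    by (simp add: bernoulli_def flip: measure_up_clique_heap[OF fin P])
qed

section \<open>The matrix \<open>B\<close>\<close>

lemma clique_enum:
  assumes "finite S"
  shows "distinct (clique_enum S I) \<and> set (clique_enum S I) = cliques S I"
  unfolding clique_enum_def using finite_clique_sets[OF assms] cliques_eq_clique_heap_image[OF assms]
  by (metis (mono_tags, lifting) finite_distinct_list finite_imageI someI_ex)

lemma clique_enum_nth:
  assumes "finite S" and "i < length (clique_enum S I)"
  shows "pieces (clique_enum S I ! i) \<in> clique_sets S I
    \<and> clique_enum S I ! i = clique_heap I (pieces (clique_enum S I ! i))"
proof -
  have "clique_enum S I ! i \<in> clique_heap I ` clique_sets S I"
    using clique_enum[OF assms(1)] nth_mem[OF assms(2)] cliques_eq_clique_heap_image[OF assms(1)] by auto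
  then obtain c where c: "c \<in> clique_sets S I" "clique_enum S I ! i = clique_heap I c"
    by blast
  then show ?thesis
    using pieces_clique_heap[OF finite_if_clique_set[OF assms(1) c(1)]] by simp
qed

lemma sum_clique_enum:
  assumes "finite S"
  shows "(\<Sum>j<length (clique_enum S I). g (clique_enum S I ! j)) = (\<Sum>c\<in>clique_sets S I. g (clique_heap I c))"
proof -
  have "bij_betw ((!) (clique_enum S I)) {..<length (clique_enum S I)} (cliques S I)"
    using clique_enum[OF assms] by (intro bij_betw_nth) auto
  then have "(\<Sum>j<length (clique_enum S I). g (clique_enum S I ! j)) = (\<Sum>h\<in>cliques S I. g h)"
    by (rule sum.reindex_bij_betw)
  also have "\<dots> = (\<Sum>c\<in>clique_sets S I. g (clique_heap I c))"
    unfolding cliques_eq_clique_heap_image[OF assms]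
    by (rule sum.reindex[OF inj_on_clique_heap[OF assms], unfolded comp_def])
  finally show ?thesis .
qed

lemma spectral_radius_Bmat_eq_1:
  fixes f x :: "'a set \<Rightarrow> real"
  assumes fin: "finite S" and "S \<noteq> {}"
    and f: "\<And>c. c \<in> clique_sets S I \<Longrightarrow> measure P (up S I (clique_heap I c)) = f c"
    and x_pos: "\<And>\<gamma>. \<gamma> \<in> clique_sets S I \<Longrightarrow> 0 < x \<gamma>"
    and fixed: "\<And>\<gamma>. \<gamma> \<in> clique_sets S I \<Longrightarrow>
      (\<Sum>\<gamma>'\<in>{\<gamma>'\<in>clique_sets S I. \<gamma>' \<subseteq> dependent_letters S I \<gamma>}. f \<gamma>' * x \<gamma>') = x \<gamma>"
  shows "spectral_radius (Bmat S I P) = 1"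
proof -
  define cs where "cs = clique_enum S I"
  define n where "n = length cs"
  note cs_nth = clique_enum_nth[OF fin, of _ I, folded cs_def n_def]
  obtain s where "s \<in> S"
    using \<open>S \<noteq> {}\<close> by blast
  then have "clique_heap I {s} \<in> set cs"
    using clique_enum[OF fin] cliques_eq_clique_heap_image[OF fin]
    by (auto simp: cs_def clique_sets_def indep_set_def)
  then have "0 < n"
    unfolding n_def by (metis empty_iff length_greater_0_conv set_empty)
  define a where
    "a i j = (if arrow I (cs ! i) (cs ! j) then measure P (up S I (cs ! j)) else 0)" for i j
  have "Bmat S I P = mat n n (\<lambda>(i, j). complex_of_real (a i j))"
    unfolding Bmat_def Let_def cs_def[symmetric] n_def a_def by (intro cong_mat) auto
  moreover have "(\<Sum>j<n. a i j * x (pieces (cs ! j))) = 1 * x (pieces (cs ! i))" if i: "i < n" for i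
  proof -
    let ?\<gamma> = "pieces (cs ! i)"
    have "(\<Sum>j<n. a i j * x (pieces (cs ! j)))
        = (\<Sum>c\<in>clique_sets S I. (if arrow I (cs ! i) (clique_heap I c)
            then measure P (up S I (clique_heap I c)) else 0) * x (pieces (clique_heap I c)))"
      unfolding a_def n_def cs_def
      by (rule sum_clique_enum[OF fin, of "\<lambda>h. (if arrow I (clique_enum S I ! i) h
          then measure P (up S I h) else 0) * x (pieces h)"])
    also have "\<dots> = (\<Sum>c\<in>clique_sets S I. if c \<subseteq> dependent_letters S I ?\<gamma> then f c * x c else 0)"
    proof (rule sum.cong[OF refl])
      fix c assume c: "c \<in> clique_sets S I"
      have "arrow I (cs ! i) (clique_heap I c) \<longleftrightarrow> c \<subseteq> dependent_letters S I ?\<gamma>"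
        using arrow_clique_heap_iff[OF fin conjunct1[OF cs_nth[OF i]] c]
        by (simp only: conjunct2[OF cs_nth[OF i], symmetric])
      then show "(if arrow I (cs ! i) (clique_heap I c) then measure P (up S I (clique_heap I c)) else 0)
          * x (pieces (clique_heap I c)) = (if c \<subseteq> dependent_letters S I ?\<gamma> then f c * x c else 0)"
        using pieces_clique_heap[OF finite_if_clique_set[OF fin c]] f[OF c] by simp
    qed
    also have "\<dots> = x ?\<gamma>"
      using fixed[of ?\<gamma>] cs_nth[OF i] by (simp add: sum.inter_filter[OF finite_clique_sets[OF fin]])
    finally show ?thesis
      by simp
  qed
  ultimately show ?thesis
    using spectral_radius_eq_if_pos_eigenvector[OF \<open>0 < n\<close>, of a "\<lambda>i. x (pieces (cs ! i))" 1]
      x_pos cs_nth by (simp add: a_def)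
qed

theorem lemma4:
  fixes S :: "'a set" and I :: "('a \<times> 'a) set" and P :: "(nat \<Rightarrow> 'a list set) measure"
  assumes "finite S" and "card S \<ge> 2"
    and "I \<subseteq> S \<times> S" and "sym I" and "\<forall>a. (a, a) \<notin> I"
    and "\<forall>a\<in>S. \<forall>b\<in>S. (a, b) \<in> ((S \<times> S) - I)\<^sup>*"
    and "bernoulli S I P"
  shows "spectral_radius (Bmat S I P) = 1"
proof -
  note fin = assms(1) and P = assms(7)
  let ?q = "first_clique_law P S I"
  have up_eq: "\<And>c. c \<in> clique_sets S I \<Longrightarrow> measure P (up S I (clique_heap I c)) = up_weight S I ?q c"
    using measure_up_clique_heap[OF fin P] .
  have up_pos: "\<And>c. c \<in> clique_sets S I \<Longrightarrow> 0 < up_weight S I ?q c"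
    using P clique_heap_in_heaps[OF fin] by (auto simp: bernoulli_def simp flip: up_eq)
  have q_nonneg: "\<And>c. c \<in> clique_sets S I \<Longrightarrow> 0 \<le> ?q c"
    by (simp add: first_clique_law_def)
  have factor: "\<And>c. c \<in> clique_sets S I \<Longrightarrow> ?q c = up_weight S I ?q c * dep_weight S I ?q c"
    using weight_eq_up_weight_mult_dep_weight[OF fin assms(5) sum_first_clique_law[OF fin P]]
      up_weight_first_clique_law_mult[OF fin P assms(4,5)] by blast
  have "S \<noteq> {}"
    using assms(2) by auto
  then show ?thesis
    using dep_weight_pos[OF fin assms(4-6) q_nonneg sum_first_clique_law[OF fin P] up_pos factor]
      dep_weight_fixed_point[OF factor]
    by (intro spectral_radius_Bmat_eq_1[OF fin _ up_eq, where x = "dep_weight S I ?q"])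
qed

end
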